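(* Fix any environment trace $e(\cdot)$ with time proportions $(\pi^e)_{e\in\mathcal E}$ and any arrival trace $N(\cdot)$ with traffic load $\rho=\lim_{t\to\infty}N(t)/t$. If $\rho\notin\mathcal R(\mathcal S^e,\pi^e,e\in\mathcal E)$, then under any admissible schedule $S(\cdot)$ the workload satisfies $$\limsup_{t\to\infty}\frac{X_q(t)}{t}>0\quad\text{for at least one queue } q\in\mathcal Q .$$
   Context: Fix integers $Q\ge1$ and $E\ge1$; queues are indexed by $q\in\mathcal Q=\{1,\dots,Q\}$ and environment states by $e\in\mathcal E=\{1,\dots,E\}$. For each $e\in\mathcal E$, $\mathcal S^e\subset\mathbb R^Q$ is a finite nonempty set of service vectors. Components may be negative: $S_q>0$ drains queue $q$ at rate $S_q$, while $S_q<0$ feeds queue $q$ at rate $-S_q$. Each $\mathcal S^e$ is complete: if $S\in\mathcal S^e$ and $S_q>0$, then the vector obtained from $S$ by replacing $S_q$ with $0$ also lies in $\mathcal S^e$. An environment trace is a measurable map $e:[0,\infty)\to\mathcal E$ such that $\pi^e=\lim_{t\to\infty}\frac1t\int_0^t\mathbf 1\{e(z)=e\}\,dz$ exists for each $e$, with $\pi^e>0$ and $\sum_e\pi^e=1$. An arrival trace is the cumulative workload arrival $N(t)=\int_0^tA(z)\,dz\in\mathbb R^Q_{\ge0}$. The rate $A$ may contain Dirac $\delta$-jumps, so $N$ is componentwise nondecreasing with left limits. Its traffic load $\rho=\lim_{t\to\infty}N(t)/t\in\mathbb R^Q_{\ge0}$ is assumed to exist. No other assumption is made on the trace, which may be adversarial.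 An admissible schedule is a measurable map $S:[0,\infty)\to\mathbb R^Q$ with $S(t)\in\mathcal S^{e(t)}$ for all $t$. The resulting workload is $X(t)=X(0)+N(t)-\int_0^tS(z)\,dz$, where $X(0)\in\mathbb R^Q_{\ge0}$, and it satisfies $X(t)\in\mathbb R^Q_{\ge0}$ for all $t$. The stability region is $$\mathcal R(\mathcal S^e,\pi^e,e\in\mathcal E)=\Big\{\rho\in\mathbb R^Q_{\ge0}:\rho\le\sum_{e\in\mathcal E}\pi^e\sum_{S\in\mathcal S^e}\phi^e_S S\ \text{for some } \phi^e_S\ge0 \text{ with } \sum_{S\in\mathcal S^e}\phi^e_S=1,\ e\in\mathcal E\Big\},$$ where the inequality is componentwise. *)

theory Defs
  imports "HOL-Analysis.Analysis"
begin

definition stab_region ::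
  "('e::finite \<Rightarrow> ('q::finite \<Rightarrow> real) set) \<Rightarrow> ('e \<Rightarrow> real) \<Rightarrow> ('q \<Rightarrow> real) set" where
  "stab_region Sset piE =
     {rho. (\<forall>q. 0 \<le> rho q) \<and>
        (\<exists>phi :: 'e \<Rightarrow> ('q \<Rightarrow> real) \<Rightarrow> real.
           (\<forall>e. \<forall>S\<in>Sset e. 0 \<le> phi e S) \<and>
           (\<forall>e. (\<Sum>S\<in>Sset e. phi e S) = 1) \<and>
           (\<forall>q. rho q \<le> (\<Sum>e\<in>UNIV. piE e * (\<Sum>S\<in>Sset e. phi e S * S q))))}"

definition complete_service_set :: "('q \<Rightarrow> real) set \<Rightarrow> bool" where
  "complete_service_set A \<longleftrightarrow> (\<forall>S\<in>A. \<forall>q. 0 < S q \<longrightarrow> S(q := 0) \<in> A)"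

end

theory Submission
  imports Defs "HOL-Real_Asymp.Real_Asymp"
begin

text \<open>
  Suppose every queue has \<open>limsup X\<^sub>q(t)/t \<le> 0\<close>.
  Since X is nonnegative, X(t)/t tends to 0, so the cumulative service
  \<open>\<integral>\<^sub>0\<^sup>t S\<close> divided by t tends to the load \<open>\<rho>\<close>.  Split [0,t] into the occupation sets
  "environment is e and the schedule uses vector s"; their relative lengths
  w_t(e,s) lie in [0,1], sum over s to the fraction of time spent in e (which tends
  to \<open>\<pi>\<^sup>e\<close>), and weight the service vectors to give the service average.  Along a
  subsequence all finitely many w_t(e,s) converge; the limits divided by \<open>\<pi>\<^sup>e\<close>
  are a valid choice of \<open>\<phi>\<^sup>e\<^sub>S\<close> exhibiting \<open>\<rho>\<close> in the stability region.
\<close>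

lemma finite_family_convergent_subseq:
  fixes f :: "'i \<Rightarrow> nat \<Rightarrow> real"
  assumes "finite I" "\<And>i. i \<in> I \<Longrightarrow> bounded (range (f i))"
  shows "\<exists>r. strict_mono r \<and> (\<forall>i\<in>I. \<exists>l. (\<lambda>n. f i (r n)) \<longlonglongrightarrow> l)"
  using assms
proof (induction I rule: finite_induct)
  case empty
  show ?case by (rule exI[of _ id]) (auto simp: strict_mono_def)
next
  case (insert i I)
  then obtain r where r: "strict_mono r" "\<forall>j\<in>I. \<exists>l. (\<lambda>n. f j (r n)) \<longlonglongrightarrow> l"
    by auto
  have "bounded (range (f i \<circ> r))"
    using insert.prems[of i] by (rule bounded_subset) auto
  then obtain l r' where r': "strict_mono r'" "((f i \<circ> r) \<circ> r') \<longlonglongrightarrow> l"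
    using bounded_imp_convergent_subsequence by blast
  show ?case
  proof (intro exI[of _ "r \<circ> r'"] conjI ballI)
    show "strict_mono (r \<circ> r')" using r r' by (simp add: strict_mono_o)
    fix j assume "j \<in> insert i I"
    then show "\<exists>l. (\<lambda>n. f j ((r \<circ> r') n)) \<longlonglongrightarrow> l"
    proof
      assume "j = i"
      then show ?thesis using r' by (auto simp: o_def)
    next
      assume "j \<in> I"
      then obtain l' where "(\<lambda>n. f j (r n)) \<longlonglongrightarrow> l'" using r by auto
      from LIMSEQ_subseq_LIMSEQ[OF this r'(1)] show ?thesis by (auto simp: o_def)
    qed
  qed
qed

lemma nonneg_Limsup_le_zero_tendsto_zero:
  fixes f :: "real \<Rightarrow> real"
  assumes "Limsup at_top (\<lambda>t. ereal (f t)) \<le> 0" "eventually (\<lambda>t. 0 \<le> f t) at_top"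
  shows "(f \<longlongrightarrow> 0) at_top"
proof -
  have "0 \<le> Liminf at_top (\<lambda>t. ereal (f t))"
    by (rule Liminf_bounded) (use assms(2) in \<open>auto elim: eventually_mono\<close>)
  moreover have "Liminf at_top (\<lambda>t. ereal (f t)) \<le> Limsup at_top (\<lambda>t. ereal (f t))"
    by (rule Liminf_le_Limsup) simp
  ultimately have "((\<lambda>t. ereal (f t)) \<longlongrightarrow> ereal 0) at_top"
    using assms(1) by (intro Liminf_eq_Limsup) (auto simp: zero_ereal_def)
  then show ?thesis by (simp add: lim_ereal)
qed

definition occupation ::
  "(real \<Rightarrow> 'e) \<Rightarrow> (real \<Rightarrow> 'q \<Rightarrow> real) \<Rightarrow> real \<Rightarrow> 'e \<Rightarrow> ('q \<Rightarrow> real) \<Rightarrow> real set" where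
  "occupation env S t e s = {z. 0 \<le> z \<and> z \<le> t \<and> env z = e \<and> S z = s}"

lemma occupation_sets:
  fixes S :: "real \<Rightarrow> 'q::finite \<Rightarrow> real"
  assumes "env \<in> measurable lborel (count_space UNIV)"
    and "\<And>q. (\<lambda>t. S t q) \<in> borel_measurable lborel"
  shows "occupation env S t e s \<in> sets lborel"
proof -
  have "occupation env S t e s = {0..t} \<inter> (env -` {e} \<inter> space lborel)
          \<inter> (\<Inter>q. (\<lambda>z. S z q) -` {s q} \<inter> space lborel)"
    by (auto simp: occupation_def fun_eq_iff)
  also have "\<dots> \<in> sets lborel"
    using measurable_sets[OF assms(1), of "{e}"] measurable_sets[OF assms(2), of "{s q}" for q]
    by (intro sets.Int sets.countable_INT') auto
  finally show ?thesis .
qed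

lemma emeasure_occupation_le: "emeasure lborel (occupation env S t e s) \<le> emeasure lborel {0..t}"
  by (rule emeasure_mono) (auto simp: occupation_def)

lemma emeasure_occupation_finite: "emeasure lborel (occupation env S t e s) < \<infinity>"
proof -
  have "emeasure lborel {0..t} < \<infinity>" by (simp add: emeasure_lborel_Icc_eq)
  then show ?thesis by (rule le_less_trans[OF emeasure_occupation_le])
qed

lemma measure_occupation_le:
  assumes "0 \<le> t"
  shows "measure lborel (occupation env S t e s) \<le> t"
  using emeasure_occupation_le[of env S t e s] emeasure_occupation_finite[of env S t e s] assms
  by (simp add: measure_def enn2real_leI)

text \<open>Pointwise, the occupation sets of environment e partition the times in [0,t]
  spent in e, so summing their indicators against a weight f picks out f (S z).\<close>
lemma occupation_indicator_sum:
  fixes f :: "('q \<Rightarrow> real) \<Rightarrow> real"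
  assumes "finite (Sset e)" "\<And>t. 0 \<le> t \<Longrightarrow> S t \<in> Sset (env t)"
  shows "(\<Sum>s\<in>Sset e. indicator (occupation env S t e s) z * f s)
           = indicator {0..t} z * indicator {z. env z = e} z * f (S z)"
proof (cases "z \<in> {0..t} \<and> env z = e")
  case True
  have "(\<Sum>s\<in>Sset e. indicator (occupation env S t e s) z * f s)
          = (\<Sum>s\<in>Sset e. if s = S z then f s else 0)"
    using True by (intro sum.cong) (auto simp: occupation_def indicator_def)
  also have "\<dots> = f (S z)"
    using assms True by (auto simp: sum.delta')
  finally show ?thesis using True by (simp add: indicator_def)
next
  case False
  then show ?thesis by (auto simp: occupation_def indicator_def)
qed

lemma integral_occupation_sum:
  fixes S :: "real \<Rightarrow> 'q::finite \<Rightarrow> real" and c :: "('q \<Rightarrow> real) \<Rightarrow> real"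
  assumes "env \<in> measurable lborel (count_space UNIV)"
    and "\<And>q. (\<lambda>t. S t q) \<in> borel_measurable lborel"
  shows "integrable lborel (\<lambda>z. \<Sum>s\<in>A. indicator (occupation env S t e s) z * c s)"
    and "(LINT z|lborel. (\<Sum>s\<in>A. indicator (occupation env S t e s) z * c s))
           = (\<Sum>s\<in>A. measure lborel (occupation env S t e s) * c s)"
proof -
  have int: "integrable lborel (\<lambda>z. indicator (occupation env S t e s) z * c s)" for s
    by (intro integrable_mult_left integrable_real_indicator occupation_sets[OF assms]
        emeasure_occupation_finite)
  then show "integrable lborel (\<lambda>z. \<Sum>s\<in>A. indicator (occupation env S t e s) z * c s)"
    by auto
  show "(LINT z|lborel. (\<Sum>s\<in>A. indicator (occupation env S t e s) z * c s))
          = (\<Sum>s\<in>A. measure lborel (occupation env S t e s) * c s)"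
    using int by (simp add: Bochner_Integration.integral_sum)
qed

lemma env_time_occupation:
  fixes S :: "real \<Rightarrow> 'q::finite \<Rightarrow> real"
  assumes "finite (Sset e)" "\<And>t. 0 \<le> t \<Longrightarrow> S t \<in> Sset (env t)"
    and "env \<in> measurable lborel (count_space UNIV)"
    and "\<And>q. (\<lambda>t. S t q) \<in> borel_measurable lborel"
  shows "(LINT z:{0..t}|lborel. indicator {z. env z = e} z)
           = (\<Sum>s\<in>Sset e. measure lborel (occupation env S t e s))"
proof -
  have "(LINT z:{0..t}|lborel. indicator {z. env z = e} z)
          = (LINT z|lborel. (\<Sum>s\<in>Sset e. indicator (occupation env S t e s) z * (1::real)))"
    using occupation_indicator_sum[where Sset=Sset and S=S and env=env and e=e and t=t
          and f="\<lambda>_. 1", OF assms(1,2)]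
    by (simp add: set_lebesgue_integral_def)
  also have "\<dots> = (\<Sum>s\<in>Sset e. measure lborel (occupation env S t e s) * 1)"
    by (rule integral_occupation_sum(2)[where S=S, OF assms(3,4)])
  finally show ?thesis by simp
qed

lemma service_occupation:
  fixes S :: "real \<Rightarrow> 'q::finite \<Rightarrow> real" and env :: "real \<Rightarrow> 'e::finite"
  assumes "\<And>e. finite (Sset e)" "\<And>t. 0 \<le> t \<Longrightarrow> S t \<in> Sset (env t)"
    and "env \<in> measurable lborel (count_space UNIV)"
    and "\<And>q. (\<lambda>t. S t q) \<in> borel_measurable lborel"
  shows "(LINT z:{0..t}|lborel. S z q)
           = (\<Sum>e\<in>UNIV. \<Sum>s\<in>Sset e. measure lborel (occupation env S t e s) * s q)"
proof -
  have "indicator {0..t} z * S z q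
          = (\<Sum>e\<in>UNIV. \<Sum>s\<in>Sset e. indicator (occupation env S t e s) z * s q)" for z
    using occupation_indicator_sum[where Sset=Sset and S=S and env=env and t=t and z=z
          and f="\<lambda>s. s q", OF assms(1,2)]
    by (simp add: indicator_def sum.delta')
  then have "(LINT z:{0..t}|lborel. S z q)
      = (LINT z|lborel. (\<Sum>e\<in>UNIV. \<Sum>s\<in>Sset e. indicator (occupation env S t e s) z * s q))"
    by (simp add: set_lebesgue_integral_def)
  also have "\<dots> = (\<Sum>e\<in>UNIV. \<Sum>s\<in>Sset e. measure lborel (occupation env S t e s) * s q)"
    using integral_occupation_sum[where S=S and c="\<lambda>s. s q", OF assms(3,4)]
    by (simp add: Bochner_Integration.integral_sum)
  finally show ?thesis .
qed

text \<open>If weights w_n(e,s) in [0,1] have per-environment totals tending to \<open>\<pi>\<^sup>e > 0\<close>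
  and the weighted service vectors tend to a nonnegative \<open>\<rho>\<close>, then \<open>\<rho>\<close> is in the
  stability region: normalised subsequential limits of the weights are valid \<open>\<phi>\<close>.\<close>
lemma limit_of_mixtures_in_stab_region:
  fixes Sset :: "'e::finite \<Rightarrow> ('q::finite \<Rightarrow> real) set"
    and w :: "nat \<Rightarrow> 'e \<Rightarrow> ('q \<Rightarrow> real) \<Rightarrow> real"
  assumes Sset_finite: "\<And>e. finite (Sset e)"
    and piE_pos: "\<And>e. 0 < piE e"
    and rho_nonneg: "\<And>q. 0 \<le> rho q"
    and w_range: "\<And>n e s. 0 \<le> w n e s \<and> w n e s \<le> 1"
    and env_lim: "\<And>e. (\<lambda>n. \<Sum>s\<in>Sset e. w n e s) \<longlonglongrightarrow> piE e"
    and service_lim: "\<And>q. (\<lambda>n. \<Sum>e\<in>UNIV. \<Sum>s\<in>Sset e. w n e s * s q) \<longlonglongrightarrow> rho q"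
  shows "rho \<in> stab_region Sset piE"
proof -
  define J where "J = (SIGMA e:UNIV. Sset e)"
  have "finite J" unfolding J_def using Sset_finite by auto
  moreover have "bounded (range (\<lambda>n. w n (fst i) (snd i)))" for i
    unfolding bounded_iff using w_range by (intro exI[of _ 1]) auto
  ultimately obtain r where r: "strict_mono r"
    and conv: "\<forall>i\<in>J. \<exists>l. (\<lambda>n. w (r n) (fst i) (snd i)) \<longlonglongrightarrow> l"
    using finite_family_convergent_subseq[of J "\<lambda>i n. w n (fst i) (snd i)"] by blast
  define l where "l e s = lim (\<lambda>n. w (r n) e s)" for e s
  have l: "(\<lambda>n. w (r n) e s) \<longlonglongrightarrow> l e s" if "s \<in> Sset e" for e s
    using conv that unfolding l_def J_def convergent_LIMSEQ_iff[symmetric] convergent_def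
    by fastforce
  have l_nonneg: "0 \<le> l e s" if "s \<in> Sset e" for e s
    by (rule tendsto_lowerbound[OF l[OF that]]) (use w_range in auto)
  have l_env: "(\<Sum>s\<in>Sset e. l e s) = piE e" for e
  proof (rule LIMSEQ_unique)
    show "(\<lambda>n. \<Sum>s\<in>Sset e. w (r n) e s) \<longlonglongrightarrow> (\<Sum>s\<in>Sset e. l e s)"
      by (intro tendsto_sum l)
    show "(\<lambda>n. \<Sum>s\<in>Sset e. w (r n) e s) \<longlonglongrightarrow> piE e"
      using LIMSEQ_subseq_LIMSEQ[OF env_lim r] by (simp add: o_def)
  qed
  have l_service: "(\<Sum>e\<in>UNIV. \<Sum>s\<in>Sset e. l e s * s q) = rho q" for q
  proof (rule LIMSEQ_unique)
    show "(\<lambda>n. \<Sum>e\<in>UNIV. \<Sum>s\<in>Sset e. w (r n) e s * s q)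
            \<longlonglongrightarrow> (\<Sum>e\<in>UNIV. \<Sum>s\<in>Sset e. l e s * s q)"
      by (intro tendsto_sum tendsto_mult tendsto_const l)
    show "(\<lambda>n. \<Sum>e\<in>UNIV. \<Sum>s\<in>Sset e. w (r n) e s * s q) \<longlonglongrightarrow> rho q"
      using LIMSEQ_subseq_LIMSEQ[OF service_lim r] by (simp add: o_def)
  qed
  define phi where "phi e s = l e s / piE e" for e s
  show ?thesis
    unfolding stab_region_def
  proof (intro CollectI conjI allI exI[of _ phi] ballI)
    show "0 \<le> phi e s" if "s \<in> Sset e" for e s
      using l_nonneg[OF that] piE_pos[of e] by (simp add: phi_def)
    show "(\<Sum>s\<in>Sset e. phi e s) = 1" for e
      using l_env[of e] piE_pos[of e] by (simp add: phi_def flip: sum_divide_distrib)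
    have "piE e * (\<Sum>s\<in>Sset e. phi e s * s q) = (\<Sum>s\<in>Sset e. l e s * s q)" for e q
      using piE_pos[of e] by (simp add: phi_def sum_distrib_left)
    then show "rho q \<le> (\<Sum>e\<in>UNIV. piE e * (\<Sum>s\<in>Sset e. phi e s * s q))" for q
      using l_service[of q] by simp
  qed (use rho_nonneg in auto)
qed

lemma service_average_in_stab_region:
  fixes Sset :: "'e::finite \<Rightarrow> ('q::finite \<Rightarrow> real) set"
    and env :: "real \<Rightarrow> 'e" and S :: "real \<Rightarrow> 'q \<Rightarrow> real"
  assumes Sset_finite: "\<And>e. finite (Sset e)"
    and env_meas: "env \<in> measurable lborel (count_space UNIV)"
    and env_prop: "\<And>e. ((\<lambda>t. (LINT z:{0..t}|lborel. indicator {z. env z = e} z) / t)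
                          \<longlongrightarrow> piE e) at_top"
    and piE_pos: "\<And>e. 0 < piE e"
    and S_meas: "\<And>q. (\<lambda>t. S t q) \<in> borel_measurable lborel"
    and S_adm: "\<And>t. 0 \<le> t \<Longrightarrow> S t \<in> Sset (env t)"
    and service: "\<And>q. ((\<lambda>t. (LINT z:{0..t}|lborel. S z q) / t) \<longlongrightarrow> rho q) at_top"
    and rho_nonneg: "\<And>q. 0 \<le> rho q"
  shows "rho \<in> stab_region Sset piE"
proof (rule limit_of_mixtures_in_stab_region[OF Sset_finite piE_pos rho_nonneg])
  define w where "w n e s = measure lborel (occupation env S (real n) e s) / real n" for n e s
  show "0 \<le> w n e s \<and> w n e s \<le> 1" for n e s
    using measure_occupation_le[of "real n" env S e s] by (auto simp: w_def divide_le_eq_1)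
  have along_naturals: "(\<lambda>n. f (real n)) \<longlonglongrightarrow> L" if "(f \<longlongrightarrow> L) at_top" for f :: "real \<Rightarrow> real" and L
    using filterlim_compose[OF that filterlim_real_sequentially] by (simp add: o_def)
  show "(\<lambda>n. \<Sum>s\<in>Sset e. w n e s) \<longlonglongrightarrow> piE e" for e
    using along_naturals[OF env_prop]
    by (simp add: w_def env_time_occupation[OF Sset_finite S_adm env_meas S_meas]
        sum_divide_distrib)
  show "(\<lambda>n. \<Sum>e\<in>UNIV. \<Sum>s\<in>Sset e. w n e s * s q) \<longlonglongrightarrow> rho q" for q
    using along_naturals[OF service]
    by (simp add: w_def service_occupation[OF Sset_finite S_adm env_meas S_meas]
        sum_divide_distrib)
qed

theorem proposition1:
  fixes Sset :: "'e::finite \<Rightarrow> ('q::finite \<Rightarrow> real) set"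
    and env :: "real \<Rightarrow> 'e"
    and piE :: "'e \<Rightarrow> real"
    and N :: "real \<Rightarrow> 'q \<Rightarrow> real"
    and rho :: "'q \<Rightarrow> real"
    and S :: "real \<Rightarrow> 'q \<Rightarrow> real"
    and X0 :: "'q \<Rightarrow> real"
    and X :: "real \<Rightarrow> 'q \<Rightarrow> real"
  assumes Sset_finite: "\<And>e. finite (Sset e)"
    and Sset_nonempty: "\<And>e. Sset e \<noteq> {}"
    and Sset_complete: "\<And>e. complete_service_set (Sset e)"
    and env_meas: "env \<in> measurable lborel (count_space UNIV)"
    and env_prop: "\<And>e. ((\<lambda>t. (LINT z:{0..t}|lborel. indicator {z. env z = e} z) / t)
                          \<longlongrightarrow> piE e) at_top"
    and piE_pos: "\<And>e. 0 < piE e"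
    and piE_sum: "(\<Sum>e\<in>UNIV. piE e) = 1"
    and N_nonneg: "\<And>t q. 0 \<le> t \<Longrightarrow> 0 \<le> N t q"
    and N_mono: "\<And>s t q. 0 \<le> s \<Longrightarrow> s \<le> t \<Longrightarrow> N s q \<le> N t q"
    and load: "\<And>q. ((\<lambda>t. N t q / t) \<longlongrightarrow> rho q) at_top"
    and S_meas: "\<And>q. (\<lambda>t. S t q) \<in> borel_measurable lborel"
    and S_adm: "\<And>t. 0 \<le> t \<Longrightarrow> S t \<in> Sset (env t)"
    and X0_nonneg: "\<And>q. 0 \<le> X0 q"
    and X_def: "\<And>t q. 0 \<le> t \<Longrightarrow> X t q = X0 q + N t q - (LINT z:{0..t}|lborel. S z q)"
    and X_nonneg: "\<And>t q. 0 \<le> t \<Longrightarrow> 0 \<le> X t q"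
    and not_stable: "rho \<notin> stab_region Sset piE"
  shows "\<exists>q. Limsup at_top (\<lambda>t. ereal (X t q / t)) > 0"
proof (rule ccontr)
  assume "\<not> (\<exists>q. Limsup at_top (\<lambda>t. ereal (X t q / t)) > 0)"
  then have X_rate: "((\<lambda>t. X t q / t) \<longlongrightarrow> 0) at_top" for q
    by (intro nonneg_Limsup_le_zero_tendsto_zero)
       (auto simp: not_less X_nonneg intro: eventually_mono[OF eventually_ge_at_top[of 0]])
  have rho_nonneg: "0 \<le> rho q" for q
    by (rule tendsto_lowerbound[OF load])
       (auto simp: N_nonneg intro: eventually_mono[OF eventually_ge_at_top[of 0]])
  have service: "((\<lambda>t. (LINT z:{0..t}|lborel. S z q) / t) \<longlongrightarrow> rho q) at_top" for q
  proof -
    have "((\<lambda>t. X0 q / t + N t q / t - X t q / t) \<longlongrightarrow> 0 + rho q - 0) at_top"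
      by (intro tendsto_intros load X_rate) real_asymp
    moreover have "\<forall>\<^sub>F t in at_top. X0 q / t + N t q / t - X t q / t
                                    = (LINT z:{0..t}|lborel. S z q) / t"
      by (intro eventually_mono[OF eventually_ge_at_top[of 0]])
         (simp add: X_def diff_divide_distrib add_divide_distrib)
    ultimately show ?thesis by (simp add: tendsto_cong)
  qed
  have "rho \<in> stab_region Sset piE"
    by (rule service_average_in_stab_region[OF Sset_finite env_meas env_prop piE_pos
          S_meas S_adm service rho_nonneg])
  with not_stable show False by simp
qed

end
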